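(* Let $G=(V,E)$ be a bridged graph that contains an induced cycle of length greater than three, let $C$ be a shortest such induced cycle, of length $k$, and suppose $x\notin C$ is such that $C\cup\{x\}$ induces a uniquely centered wheel. For $v\in V\setminus (C\cup\{x\})$, let $A(v)$ denote the set of neighbours of $v$ in $C$. If $A(v)\ne\emptyset$, then (a) $A(v)$ induces a path with at most three vertices (i.e. consists of at most three consecutive vertices of $C$); and (b) if $v$ is not adjacent to $x$, then $A(v)$ induces a path with at most two vertices.
   Context: $G$ is bridged if it contains no isometric cycle (a cycle whose distances equal distances in $G$) of length greater than three. $C\cup\{x\}$ induces a wheel means $C$ is an induced cycle and $x$ is adjacent to all vertices of $C$; it is uniquely centered if there is no vertex $y\ne x$ such that $y$ is adjacent to all vertices of $C$ (i.e. $C\cup\{y\}$ is also an induced wheel). *)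

theory Defs
  imports Main
begin

definition graph :: "'a set \<Rightarrow> ('a \<Rightarrow> 'a \<Rightarrow> bool) \<Rightarrow> bool" where
  "graph V E \<longleftrightarrow> (\<forall>u v. E u v \<longrightarrow> u \<in> V \<and> v \<in> V \<and> E v u \<and> u \<noteq> v)"

definition walk_len :: "('a \<Rightarrow> 'a \<Rightarrow> bool) \<Rightarrow> 'a \<Rightarrow> 'a \<Rightarrow> nat \<Rightarrow> bool" where
  "walk_len E u v n \<longleftrightarrow> (\<exists>ps. length ps = Suc n \<and> ps ! 0 = u \<and> ps ! n = v
      \<and> (\<forall>i<n. E (ps ! i) (ps ! Suc i)))"

text \<open>Graph distance (only meaningful for connected pairs).\<close>
definition gdist :: "('a \<Rightarrow> 'a \<Rightarrow> bool) \<Rightarrow> 'a \<Rightarrow> 'a \<Rightarrow> nat" where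
  "gdist E u v = (LEAST n. walk_len E u v n)"

definition is_cycle :: "'a set \<Rightarrow> ('a \<Rightarrow> 'a \<Rightarrow> bool) \<Rightarrow> 'a list \<Rightarrow> bool" where
  "is_cycle V E cs \<longleftrightarrow> length cs \<ge> 3 \<and> distinct cs \<and> set cs \<subseteq> V
     \<and> (\<forall>i<length cs. E (cs ! i) (cs ! (Suc i mod length cs)))"

definition cyc_dist :: "nat \<Rightarrow> nat \<Rightarrow> nat \<Rightarrow> nat" where
  "cyc_dist k i j = (let d = (if i \<le> j then j - i else i - j) in min d (k - d))"

definition induced_cycle :: "'a set \<Rightarrow> ('a \<Rightarrow> 'a \<Rightarrow> bool) \<Rightarrow> 'a list \<Rightarrow> bool" where
  "induced_cycle V E cs \<longleftrightarrow> is_cycle V E cs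
     \<and> (\<forall>i<length cs. \<forall>j<length cs. E (cs ! i) (cs ! j) \<longrightarrow> cyc_dist (length cs) i j = 1)"

definition isometric_cycle :: "'a set \<Rightarrow> ('a \<Rightarrow> 'a \<Rightarrow> bool) \<Rightarrow> 'a list \<Rightarrow> bool" where
  "isometric_cycle V E cs \<longleftrightarrow> is_cycle V E cs
     \<and> (\<forall>i<length cs. \<forall>j<length cs. gdist E (cs ! i) (cs ! j) = cyc_dist (length cs) i j)"

definition bridged :: "'a set \<Rightarrow> ('a \<Rightarrow> 'a \<Rightarrow> bool) \<Rightarrow> bool" where
  "bridged V E \<longleftrightarrow> (\<forall>cs. isometric_cycle V E cs \<longrightarrow> length cs \<le> 3)"

definition induced_wheel :: "'a set \<Rightarrow> ('a \<Rightarrow> 'a \<Rightarrow> bool) \<Rightarrow> 'a list \<Rightarrow> 'a \<Rightarrow> bool" where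
  "induced_wheel V E cs x \<longleftrightarrow> induced_cycle V E cs \<and> x \<in> V \<and> (\<forall>c\<in>set cs. E x c)"

definition uniquely_centered_wheel :: "'a set \<Rightarrow> ('a \<Rightarrow> 'a \<Rightarrow> bool) \<Rightarrow> 'a list \<Rightarrow> 'a \<Rightarrow> bool" where
  "uniquely_centered_wheel V E cs x \<longleftrightarrow> induced_wheel V E cs x
     \<and> \<not> (\<exists>y. y \<noteq> x \<and> induced_wheel V E cs y)"

text \<open>S consists of m consecutive vertices of the cycle cs, for some 1 \<le> m \<le> b
  (for an induced cycle of length > 3 and b \<le> 3 these induce a path).\<close>
definition consecutive_on_cycle :: "'a list \<Rightarrow> 'a set \<Rightarrow> nat \<Rightarrow> bool" where
  "consecutive_on_cycle cs S b \<longleftrightarrow> (\<exists>i m. i < length cs \<and> 1 \<le> m \<and> m \<le> b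
     \<and> S = {cs ! ((i + j) mod length cs) | j. j < m})"

end

theory Submission
  imports Defs "HOL-Number_Theory.Cong"
begin

text \<open>If v is adjacent to two vertices of C that are d \<ge> 2 steps apart along C, with no neighbour
  of v strictly between them on that arc, then v and the arc span an induced cycle of length d + 2;
  unless the two ends are adjacent on C, minimality of C forces d \<ge> |C| - 2.
  A bridged graph has no induced 4-cycle, since such a cycle is isometric; hence |C| \<ge> 5, and
  there is no room for two such gaps: the neighbours of v on C form a single run of at most three
  consecutive vertices. If the run is c0 c1 c2 and v is not adjacent to the centre x,
  then v c0 x c2 is an induced 4-cycle.\<close>

lemma graph_sym: "graph V E \<Longrightarrow> E u w \<Longrightarrow> E w u"
  unfolding graph_def by blast

lemma graph_irrefl: "graph V E \<Longrightarrow> \<not> E u u"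
  unfolding graph_def by blast

lemma walk_len_0_iff: "walk_len E a b 0 \<longleftrightarrow> a = b"
  unfolding walk_len_def by (auto intro!: exI[of _ "[a]"])

lemma walk_len_1_iff: "walk_len E a b 1 \<longleftrightarrow> E a b"
  unfolding walk_len_def by (auto intro!: exI[of _ "[a,b]"])

lemma walk_len_2I: "E a c \<Longrightarrow> E c b \<Longrightarrow> walk_len E a b 2"
  unfolding walk_len_def by (auto simp: numeral_eq_Suc less_Suc_eq intro!: exI[of _ "[a,c,b]"])

lemma gdist_self: "gdist E a a = 0"
  unfolding gdist_def by (simp add: walk_len_0_iff)

lemma gdist_adjacent: "E a b \<Longrightarrow> a \<noteq> b \<Longrightarrow> gdist E a b = 1"
  unfolding gdist_def
proof (rule Least_equality)
  assume "E a b" "a \<noteq> b"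
  then show "walk_len E a b 1" using walk_len_1_iff[of E a b] by simp
  show "1 \<le> n" if "walk_len E a b n" for n
    using that \<open>a \<noteq> b\<close> walk_len_0_iff by (metis less_one not_le)
qed

lemma gdist_common_neighbour:
  assumes "E a c" "E c b" "a \<noteq> b" "\<not> E a b"
  shows "gdist E a b = 2"
  unfolding gdist_def
proof (rule Least_equality)
  show "walk_len E a b 2" using assms(1,2) by (rule walk_len_2I)
  show "2 \<le> n" if "walk_len E a b n" for n
    using that assms walk_len_0_iff walk_len_1_iff by (metis less_2_cases not_le One_nat_def)
qed

definition cyc_adj :: "nat \<Rightarrow> nat \<Rightarrow> nat \<Rightarrow> bool" where
  "cyc_adj k i j \<longleftrightarrow> j = Suc i mod k \<or> i = Suc j mod k"

lemma cyc_adj_commute: "cyc_adj k i j \<longleftrightarrow> cyc_adj k j i"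
  unfolding cyc_adj_def by blast

lemma cyc_dist_eq_1_iff:
  "3 \<le> k \<Longrightarrow> i < k \<Longrightarrow> j < k \<Longrightarrow> cyc_dist k i j = 1 \<longleftrightarrow> cyc_adj k i j"
  unfolding cyc_dist_def cyc_adj_def Let_def mod_Suc by auto

lemma cyc_adj_rotate:
  assumes "i < k" "j < k"
  shows "cyc_adj k ((r + i) mod k) ((r + j) mod k) \<longleftrightarrow> cyc_adj k i j"
proof -
  have "(r + b) mod k = Suc (r + a) mod k \<longleftrightarrow> b = Suc a mod k" if "b < k" for a b
    using that cong_add_lcancel_nat[of r b "Suc a" k] unfolding cong_def by simp
  then show ?thesis
    using assms unfolding cyc_adj_def by (simp add: mod_Suc_eq del: mod_Suc)
qed

lemma induced_cycle_iff:
  assumes "graph V E"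
  shows "induced_cycle V E L \<longleftrightarrow> 3 \<le> length L \<and> distinct L \<and> set L \<subseteq> V
    \<and> (\<forall>i<length L. \<forall>j<length L. E (L!i) (L!j) \<longleftrightarrow> cyc_adj (length L) i j)"
proof -
  have "(\<forall>i<length L. E (L!i) (L!(Suc i mod length L)))
      \<and> (\<forall>i<length L. \<forall>j<length L. E (L!i) (L!j) \<longrightarrow> cyc_adj (length L) i j)
    \<longleftrightarrow> (\<forall>i<length L. \<forall>j<length L. E (L!i) (L!j) \<longleftrightarrow> cyc_adj (length L) i j)"
    using graph_sym[OF assms] unfolding cyc_adj_def
    by (metis mod_less_divisor bot_nat_0.extremum_strict neq0_conv)
  moreover have "induced_cycle V E L \<longleftrightarrow> 3 \<le> length L \<and> distinct L \<and> set L \<subseteq> V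
      \<and> (\<forall>i<length L. E (L!i) (L!(Suc i mod length L)))
      \<and> (\<forall>i<length L. \<forall>j<length L. E (L!i) (L!j) \<longrightarrow> cyc_adj (length L) i j)"
    unfolding induced_cycle_def is_cycle_def using cyc_dist_eq_1_iff by blast
  ultimately show ?thesis by blast
qed

lemma induced_cycle_rotate:
  assumes "graph V E" "induced_cycle V E L"
  shows "induced_cycle V E (rotate r L)"
proof -
  have basic: "3 \<le> length L" "distinct L" "set L \<subseteq> V"
    and adj: "\<And>a b. a < length L \<Longrightarrow> b < length L \<Longrightarrow> E (L!a) (L!b) \<longleftrightarrow> cyc_adj (length L) a b"
    using assms(2) unfolding induced_cycle_iff[OF assms(1)] by blast+
  have "E (rotate r L ! i) (rotate r L ! j) \<longleftrightarrow> cyc_adj (length L) i j"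
    if "i < length L" "j < length L" for i j
  proof -
    have "0 < length L" using that(1) by linarith
    then have "(r + i) mod length L < length L" "(r + j) mod length L < length L"
      by simp_all
    then show ?thesis
      using that by (simp add: nth_rotate adj cyc_adj_rotate)
  qed
  with basic show ?thesis
    unfolding induced_cycle_iff[OF assms(1)] by simp
qed

lemma cyc_adj_4_opposite:
  assumes "i < 4" "j < 4" "i \<noteq> j" "\<not> cyc_adj 4 i j"
  shows "cyc_adj 4 i (Suc i mod 4)" "cyc_adj 4 (Suc i mod 4) j" "cyc_dist 4 i j = 2"
proof -
  have "i \<in> {0, 1, 2, 3}" "j \<in> {0, 1, 2, 3}" using assms(1,2) by auto
  then show "cyc_adj 4 i (Suc i mod 4)" "cyc_adj 4 (Suc i mod 4) j" "cyc_dist 4 i j = 2"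
    using assms(3,4) by (elim insertE emptyE; simp add: cyc_adj_def cyc_dist_def)+
qed

lemma induced_square_isometric:
  assumes g: "graph V E" and L: "induced_cycle V E L" "length L = 4"
  shows "isometric_cycle V E L"
proof -
  have dist: "distinct L"
    and adj: "\<And>i j. i < 4 \<Longrightarrow> j < 4 \<Longrightarrow> E (L!i) (L!j) \<longleftrightarrow> cyc_adj 4 i j"
    using L unfolding induced_cycle_iff[OF g] by auto
  have "gdist E (L!i) (L!j) = cyc_dist 4 i j" if ij: "i < 4" "j < 4" for i j
  proof -
    consider "i = j" | "i \<noteq> j" "cyc_adj 4 i j" | "i \<noteq> j" "\<not> cyc_adj 4 i j" by blast
    then show ?thesis
    proof cases
      case 1
      then show ?thesis by (simp add: gdist_self cyc_dist_def)
    next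
      case 2
      then show ?thesis
        using ij adj dist L(2) cyc_dist_eq_1_iff[of 4 i j] by (simp add: gdist_adjacent nth_eq_iff_index_eq)
    next
      case 3
      have "Suc i mod 4 < 4" by simp
      then have "E (L!i) (L!(Suc i mod 4))" "E (L!(Suc i mod 4)) (L!j)"
        using ij adj cyc_adj_4_opposite[OF ij 3] by blast+
      moreover have "L!i \<noteq> L!j" "\<not> E (L!i) (L!j)"
        using ij adj dist L(2) 3 by (simp_all add: nth_eq_iff_index_eq)
      ultimately show ?thesis
        using gdist_common_neighbour cyc_adj_4_opposite[OF ij 3] by metis
    qed
  qed
  then show ?thesis
    using L unfolding isometric_cycle_def induced_cycle_def by simp
qed

lemma bridged_no_induced_square:
  assumes g: "graph V E" and "bridged V E" and "induced_cycle V E L"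
  shows "length L \<noteq> 4"
  using assms induced_square_isometric unfolding bridged_def by fastforce

lemma bridged_no_square:
  assumes g: "graph V E" and br: "bridged V E"
    and "a \<in> V" "b \<in> V" "c \<in> V" "d \<in> V" "distinct [a, b, c, d]"
    and "E a b" "E b c" "E c d" "E d a" "\<not> E a c" "\<not> E b d"
  shows False
proof -
  have "E b a" "E c b" "E d c" "E a d" "\<not> E c a" "\<not> E d b" "\<And>u. \<not> E u u"
    using assms graph_sym[OF g] graph_irrefl[OF g] by blast+
  then have "E ([a, b, c, d] ! i) ([a, b, c, d] ! j) \<longleftrightarrow> cyc_adj 4 i j"
    if "i \<in> {0, 1, 2, 3}" "j \<in> {0, 1, 2, 3}" for i j
    using that assms by (elim insertE emptyE; simp add: cyc_adj_def)
  then have "induced_cycle V E [a, b, c, d]"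
    unfolding induced_cycle_iff[OF g] using assms by (simp add: less_Suc_eq numeral_eq_Suc)
  from bridged_no_induced_square[OF g br this] show False by simp
qed

lemma cyc_adj_Suc_Suc:
  assumes "a \<le> d" "b \<le> d"
  shows "cyc_adj (d + 2) (Suc a) (Suc b) \<longleftrightarrow> b = Suc a \<or> a = Suc b"
  using assms unfolding cyc_adj_def by (auto simp: mod_Suc)

lemma cyc_adj_0_Suc:
  assumes "b \<le> d"
  shows "cyc_adj (d + 2) 0 (Suc b) \<longleftrightarrow> b = 0 \<or> b = d"
  using assms unfolding cyc_adj_def by (auto simp: mod_Suc)

lemma induced_cycle_Cons_take:
  assumes g: "graph V E" and L: "induced_cycle V E L"
    and v: "v \<in> V" "v \<notin> set L"
    and d: "2 \<le> d" "d + 2 \<le> length L"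
    and nbrs: "\<And>j. j \<le> d \<Longrightarrow> E v (L!j) \<longleftrightarrow> j = 0 \<or> j = d"
  shows "induced_cycle V E (v # take (Suc d) L)"
proof -
  define D where "D = v # take (Suc d) L"
  have basic: "distinct L" "set L \<subseteq> V"
    and adjL: "\<And>a b. a < length L \<Longrightarrow> b < length L \<Longrightarrow> E (L!a) (L!b) \<longleftrightarrow> cyc_adj (length L) a b"
    using L unfolding induced_cycle_iff[OF g] by blast+
  have lenD: "length D = d + 2" using d by (simp add: D_def)
  have D_Suc: "D ! Suc j = L ! j" if "j \<le> d" for j using that by (simp add: D_def)
  have "distinct D" "set D \<subseteq> V"
    using basic v by (auto simp: D_def dest: in_set_takeD)
  have path: "E (L!a) (L!b) \<longleftrightarrow> b = Suc a \<or> a = Suc b" if "a \<le> d" "b \<le> d" for a b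
    using that d adjL[of a b] by (simp add: cyc_adj_def)
  have apex: "E (D!0) (D!b) \<longleftrightarrow> cyc_adj (d + 2) 0 b" if "b < d + 2" for b
  proof (cases b)
    case 0
    then show ?thesis using graph_irrefl[OF g] d by (simp add: cyc_adj_def)
  next
    case (Suc b')
    then show ?thesis using that nbrs[of b'] D_Suc[of b'] cyc_adj_0_Suc[of b' d] by (simp add: D_def)
  qed
  have "E (D!a) (D!b) \<longleftrightarrow> cyc_adj (d + 2) a b" if "a < d + 2" "b < d + 2" for a b
  proof (cases a)
    case 0
    then show ?thesis using apex that by simp
  next
    case (Suc a')
    show ?thesis
    proof (cases b)
      case 0
      then show ?thesis
        using apex[of a] that graph_sym[OF g] cyc_adj_commute by blast
    next
      case (Suc b')
      then show ?thesis
        using \<open>a = Suc a'\<close> that path[of a' b'] D_Suc[of a'] D_Suc[of b'] cyc_adj_Suc_Suc[of a' d b']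
        by simp
    qed
  qed
  then have "induced_cycle V E D"
    unfolding induced_cycle_iff[OF g] using lenD d \<open>distinct D\<close> \<open>set D \<subseteq> V\<close> by simp
  then show ?thesis by (simp add: D_def)
qed

lemma cyclic_run_start:
  fixes k :: nat
  assumes "i0 < k" "P i0" "j0 < k" "\<not> P j0"
  obtains i where "i < k" "P i" "\<not> P ((i + (k - 1)) mod k)"
proof -
  define n where "n = (LEAST n. P ((j0 + n) mod k))"
  have "j0 + (i0 + k - j0) = i0 + k" using assms(3) by arith
  then have "P ((j0 + (i0 + k - j0)) mod k)" using assms(1,2) by simp
  then have Pn: "P ((j0 + n) mod k)" unfolding n_def by (rule LeastI)
  then have "n \<noteq> 0" using assms(3,4) by (metis add_0_right mod_less)
  have "\<not> P ((j0 + (n - 1)) mod k)"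
    using not_less_Least[of "n - 1" "\<lambda>n. P ((j0 + n) mod k)"] \<open>n \<noteq> 0\<close> unfolding n_def by simp
  moreover have "((j0 + n) mod k + (k - 1)) mod k = (j0 + (n - 1)) mod k"
  proof -
    have "j0 + n + (k - 1) = j0 + (n - 1) + k" using \<open>n \<noteq> 0\<close> assms(1) by simp
    then show ?thesis by (metis mod_add_left_eq mod_add_self2)
  qed
  ultimately show ?thesis using that[of "(j0 + n) mod k"] Pn assms(1) by simp
qed

lemma Collect_in_set_eq_set_take:
  assumes "\<And>j. j < length xs \<Longrightarrow> P (xs!j) \<longleftrightarrow> j < m"
  shows "{c \<in> set xs. P c} = set (take m xs)"
proof (intro set_eqI iffI)
  fix c assume "c \<in> {c \<in> set xs. P c}"
  then obtain j where "j < length xs" "c = xs!j" "P c" by (auto simp: in_set_conv_nth)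
  then show "c \<in> set (take m xs)" using assms by (auto simp: in_set_conv_nth)
next
  fix c assume "c \<in> set (take m xs)"
  then obtain j where "j < m" "j < length xs" "c = xs!j" by (auto simp: in_set_conv_nth)
  then show "c \<in> {c \<in> set xs. P c}" using assms by auto
qed

lemma consecutive_on_cycle_take_rotate:
  assumes "i < length cs" "1 \<le> m" "m \<le> b" "m \<le> length cs"
  shows "consecutive_on_cycle cs (set (take m (rotate i cs))) b"
proof -
  have "set (take m (rotate i cs)) = (\<lambda>j. rotate i cs ! j) ` {0..<m}"
    using assms(4) by (simp add: nth_image)
  also have "\<dots> = (\<lambda>j. cs ! ((i + j) mod length cs)) ` {0..<m}"
    using assms(4) by (intro image_cong) (simp_all add: nth_rotate)
  finally have "set (take m (rotate i cs)) = {cs ! ((i + j) mod length cs) | j. j < m}"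
    by (simp add: setcompr_eq_image atLeast0LessThan lessThan_def)
  then show ?thesis
    unfolding consecutive_on_cycle_def using assms by blast
qed

locale bridged_shortest_hole =
  fixes V :: "'a set" and E :: "'a \<Rightarrow> 'a \<Rightarrow> bool" and C :: "'a list"
  assumes graph: "graph V E" and bridged: "bridged V E"
    and hole: "induced_cycle V E C" and long: "3 < length C"
    and shortest: "\<And>D. induced_cycle V E D \<Longrightarrow> 3 < length D \<Longrightarrow> length C \<le> length D"
begin

lemma distinct_hole: "distinct C"
  and set_hole: "set C \<subseteq> V"
  and adj_hole: "a < length C \<Longrightarrow> b < length C \<Longrightarrow> E (C!a) (C!b) \<longleftrightarrow> cyc_adj (length C) a b"
  using hole unfolding induced_cycle_iff[OF graph] by blast+

lemma length_ge_5: "5 \<le> length C"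
  using long bridged_no_induced_square[OF graph bridged hole] by simp

lemma hole_not_Nil: "C \<noteq> []"
  using long by auto

lemma rotate_hole: "bridged_shortest_hole V E (rotate r C)"
  using graph bridged induced_cycle_rotate[OF graph hole] long shortest
  by unfold_locales simp_all

lemma length_le_gap:
  assumes v: "v \<in> V" "v \<notin> set C"
    and d: "2 \<le> d" "d + 2 \<le> length C"
    and nbrs: "\<And>j. j \<le> d \<Longrightarrow> E v (C!((s + j) mod length C)) \<longleftrightarrow> j = 0 \<or> j = d"
  shows "length C \<le> d + 2"
proof -
  have "E v (rotate s C ! j) \<longleftrightarrow> j = 0 \<or> j = d" if "j \<le> d" for j
    using that d nbrs[OF that] by (simp add: nth_rotate)
  then have "induced_cycle V E (v # take (Suc d) (rotate s C))"
    using induced_cycle_Cons_take[OF graph induced_cycle_rotate[OF graph hole]] v d by simp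
  then show ?thesis
    using shortest d by fastforce
qed

lemma centre_adjacent:
  assumes x: "x \<in> V" "x \<notin> set C" "\<forall>c\<in>set C. E x c"
    and v: "v \<in> V" "v \<notin> set C" "v \<noteq> x"
    and nbrs: "E v (C!0)" "E v (C!2)"
  shows "E v x"
proof (rule ccontr)
  assume "\<not> E v x"
  moreover have in_C: "C!0 \<in> set C" "C!2 \<in> set C" and "C!0 \<noteq> C!2" "\<not> E (C!0) (C!2)"
    using length_ge_5 hole_not_Nil distinct_hole adj_hole[of 0 2]
    by (simp_all add: nth_eq_iff_index_eq cyc_adj_def)
  moreover have "E (C!0) x" "E (C!2) v"
    using x(3) in_C nbrs(2) graph_sym[OF graph] by blast+
  ultimately show False
    using bridged_no_square[OF graph bridged, of v "C!0" x "C!2"] x v nbrs set_hole by auto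
qed

lemma no_neighbour_after_run:
  assumes v: "v \<in> V" "v \<notin> set C"
    and last: "\<not> E v (C!(length C - 1))"
    and run: "1 \<le> m" "\<forall>j<m. E v (C!j)" "\<not> E v (C!m)"
    and e: "m \<le> e" "e < length C"
  shows "\<not> E v (C!e)"
proof
  assume "E v (C!e)"
  define k where "k = length C"
  define e0 where "e0 = (LEAST e. m \<le> e \<and> e < k \<and> E v (C!e))"
  have e0: "m \<le> e0" "e0 < k" "E v (C!e0)"
    using LeastI[of "\<lambda>e. m \<le> e \<and> e < k \<and> E v (C!e)"] \<open>E v (C!e)\<close> e
    unfolding e0_def k_def by blast+
  have gap: "\<not> E v (C!u)" if "m \<le> u" "u < e0" for u
    using not_less_Least[of u "\<lambda>e. m \<le> e \<and> e < k \<and> E v (C!e)"] that e0(2)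
    unfolding e0_def by auto
  have k5: "5 \<le> k" using length_ge_5 by (simp add: k_def)
  have "m \<noteq> e0" "e0 \<noteq> k - 1" using e0(3) run(3) last unfolding k_def by auto
  then have me0: "m < e0" "e0 \<le> k - 2" using e0(1,2) by auto
  have "k \<le> (e0 - (m - 1)) + 2"
    unfolding k_def
  proof (rule length_le_gap[OF v, of _ "m - 1"])
    show "2 \<le> e0 - (m - 1)" "e0 - (m - 1) + 2 \<le> length C"
      using me0 run(1) unfolding k_def by auto
    fix j assume "j \<le> e0 - (m - 1)"
    then have "(m - 1 + j) mod length C = m - 1 + j" "m - 1 + j \<le> e0"
      using me0 e0(2) run(1) unfolding k_def by auto
    then show "E v (C!((m - 1 + j) mod length C)) \<longleftrightarrow> j = 0 \<or> j = e0 - (m - 1)"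
      using run e0(3) gap[of "m - 1 + j"] by (cases "j = 0"; cases "j = e0 - (m - 1)") auto
  qed
  txt \<open>Minimality stretches the gap from C!0 to C!(k-2), and then v, C!(k-2), C!(k-1), C!0
    form an induced square.\<close>
  then have "e0 = k - 2" "m = 1" using me0 run(1) by auto
  then have "E v (C!(k-2))" "E (C!0) v" using e0(3) run(1,2) graph_sym[OF graph] by auto
  moreover have "E (C!(k-2)) (C!(k-1))" "E (C!(k-1)) (C!0)" "\<not> E (C!(k-2)) (C!0)"
    using adj_hole[of "k-2" "k-1"] adj_hole[of "k-1" 0] adj_hole[of "k-2" 0] k5 hole_not_Nil
      Suc_diff_Suc[of 1 k] Suc_diff_1[of k]
    unfolding k_def by (simp_all add: cyc_adj_def)
  moreover have in_C: "C!(k-2) \<in> set C" "C!(k-1) \<in> set C" "C!0 \<in> set C"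
    using k5 unfolding k_def by (intro nth_mem, linarith)+
  then have "distinct [v, C!(k-2), C!(k-1), C!0]"
    using v(2) distinct_hole k5 hole_not_Nil unfolding k_def by (auto simp: nth_eq_iff_index_eq)
  moreover have "C!(k-2) \<in> V" "C!(k-1) \<in> V" "C!0 \<in> V"
    using set_hole in_C by auto
  ultimately show False
    using bridged_no_square[OF graph bridged, of v "C!(k-2)" "C!(k-1)" "C!0"] v last
    unfolding k_def by blast
qed

lemma neighbour_run_le_3:
  assumes v: "v \<in> V" "v \<notin> set C"
    and run: "1 \<le> m" "m < length C" "\<forall>j<m. E v (C!j)"
    and rest: "\<forall>j. m \<le> j \<longrightarrow> j < length C \<longrightarrow> \<not> E v (C!j)"
  shows "m \<le> 3"
proof (rule ccontr)
  assume "\<not> m \<le> 3"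
  have "length C \<le> (length C - (m - 1)) + 2"
  proof (rule length_le_gap[OF v, of _ "m - 1"])
    show "2 \<le> length C - (m - 1)" "length C - (m - 1) + 2 \<le> length C"
      using run(2) \<open>\<not> m \<le> 3\<close> by auto
    fix j assume j: "j \<le> length C - (m - 1)"
    show "E v (C!((m - 1 + j) mod length C)) \<longleftrightarrow> j = 0 \<or> j = length C - (m - 1)"
    proof (cases "j = length C - (m - 1)")
      case True
      then have "(m - 1 + j) mod length C = 0" using run(1,2) by simp
      then show ?thesis using True run(1,3) by simp
    next
      case False
      then have "(m - 1 + j) mod length C = m - 1 + j" "m - 1 + j < length C"
        using j run(1,2) by auto
      then show ?thesis using False run(1,3) rest by (cases "j = 0") auto
    qed
  qed
  then show False using run(2) \<open>\<not> m \<le> 3\<close> by simp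
qed

lemma neighbours_initial_run:
  assumes v: "v \<in> V" "v \<notin> set C"
    and first: "E v (C!0)" and last: "\<not> E v (C!(length C - 1))"
  obtains m where "1 \<le> m" "m \<le> 3" "\<And>j. j < length C \<Longrightarrow> E v (C!j) \<longleftrightarrow> j < m"
proof -
  define m where "m = (LEAST j. \<not> E v (C!j))"
  have "m \<le> length C - 1" "\<not> E v (C!m)"
    using last unfolding m_def by (fact Least_le, fact LeastI)
  moreover have run: "\<forall>j<m. E v (C!j)"
    unfolding m_def using not_less_Least by blast
  moreover have "1 \<le> m"
    using first \<open>\<not> E v (C!m)\<close> by (cases m) auto
  moreover have "m < length C" using \<open>m \<le> length C - 1\<close> length_ge_5 by linarith
  ultimately have rest: "\<forall>j. m \<le> j \<longrightarrow> j < length C \<longrightarrow> \<not> E v (C!j)"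
    using no_neighbour_after_run[OF v last] by blast
  show ?thesis
  proof
    show "1 \<le> m" by fact
    show "m \<le> 3" using neighbour_run_le_3[OF v \<open>1 \<le> m\<close> \<open>m < length C\<close> run rest] .
    show "E v (C!j) \<longleftrightarrow> j < m" if "j < length C" for j
      using run rest that not_le by blast
  qed
qed

end

theorem mainTheorem14:
  fixes V :: "'a set" and E :: "'a \<Rightarrow> 'a \<Rightarrow> bool" and C :: "'a list" and x v :: 'a
  assumes "graph V E"
    and "bridged V E"
    and "induced_cycle V E C" and "length C > 3"
    and "\<And>D. induced_cycle V E D \<Longrightarrow> length D > 3 \<Longrightarrow> length C \<le> length D"
    and "x \<notin> set C" and "uniquely_centered_wheel V E C x"
    and "v \<in> V" and "v \<notin> set C" and "v \<noteq> x"
    and "{c \<in> set C. E v c} \<noteq> {}"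
  shows "consecutive_on_cycle C {c \<in> set C. E v c} 3
    \<and> (\<not> E v x \<longrightarrow> consecutive_on_cycle C {c \<in> set C. E v c} 2)"
proof -
  interpret bridged_shortest_hole V E C
    using assms(1-5) by unfold_locales
  have x: "x \<in> V" "\<forall>c\<in>set C. E x c" and "\<not> induced_wheel V E C v"
    using assms(7,10) unfolding uniquely_centered_wheel_def induced_wheel_def by auto
  then obtain a where "a < length C" "\<not> E v (C!a)"
    using hole assms(8) unfolding induced_wheel_def by (metis in_set_conv_nth)
  moreover obtain c where "c < length C" "E v (C!c)"
    using assms(11) by (auto simp: in_set_conv_nth)
  ultimately obtain i where i: "i < length C" "E v (C!i)" "\<not> E v (C!((i + (length C - 1)) mod length C))"
    using cyclic_run_start[of c "length C" "\<lambda>j. E v (C!j)" a] by blast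
  define R where "R = rotate i C"
  interpret R: bridged_shortest_hole V E R
    unfolding R_def by (rule rotate_hole)
  have "E v (R!0)" "\<not> E v (R!(length R - 1))"
    using i length_ge_5 hole_not_Nil by (simp_all add: R_def nth_rotate)
  then obtain m where m: "1 \<le> m" "m \<le> 3" "\<And>j. j < length R \<Longrightarrow> E v (R!j) \<longleftrightarrow> j < m"
    using R.neighbours_initial_run assms(8,9) by (auto simp: R_def)
  have A: "{c \<in> set C. E v c} = set (take m R)"
    using Collect_in_set_eq_set_take[of R "E v" m] m(3) by (simp add: R_def)
  have "m \<le> length C" using m(2) length_ge_5 by simp
  moreover have "m \<le> 2" if "\<not> E v x"
    using m R.centre_adjacent[of x v] x assms(6,8-10) that R.length_ge_5 by (fastforce simp: R_def)
  ultimately show ?thesis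
    unfolding A R_def using consecutive_on_cycle_take_rotate i(1) m(1,2) by blast
qed

end
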